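(* Let $d\ge 1$ and $n\ge d+2$, and let $\mathcal{F}$, $B_i$ be as in the context. The number of indices $i\in[m]$ with $|B_i|=d$ is at most $\binom{n-1}{d}$. Moreover, equality holds if and only if $\{F_i: i\in[m],\ |B_i|=d\}$ is a star of maximum size, i.e. equals $\{F\in\binom{[n]}{d+1}: a\in F\}$ for some $a\in[n]$.
   Context: Let $\mathcal{F}=\{F_1,\dots,F_m\}\subseteq\binom{[n]}{d+1}$ consist of distinct sets and have VC-dimension at most $d$ (no $(d+1)$-set $S$ is shattered, i.e. no $S$ such that every $A\subseteq S$ equals $F\cap S$ for some $F\in\mathcal{F}$). For $i\in[m]$, call $B\subsetneq F_i$ admissible for $F_i$ if $F\cap F_i\neq B$ for every $F\in\mathcal{F}$ (admissible sets exist by the VC-dimension assumption). For each $i$, $B_i$ is a fixed admissible set for $F_i$ of maximum cardinality among all admissible sets for $F_i$. *)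

theory Defs
  imports Main
begin

definition shattered :: "(nat \<Rightarrow> nat set) \<Rightarrow> nat set \<Rightarrow> nat set \<Rightarrow> bool" where
  "shattered F I S \<longleftrightarrow> (\<forall>A. A \<subseteq> S \<longrightarrow> (\<exists>j\<in>I. F j \<inter> S = A))"

definition vc_dim_le :: "(nat \<Rightarrow> nat set) \<Rightarrow> nat set \<Rightarrow> nat \<Rightarrow> bool" where
  "vc_dim_le F I d \<longleftrightarrow> (\<forall>S. finite S \<and> card S = d + 1 \<longrightarrow> \<not> shattered F I S)"

definition admissible :: "(nat \<Rightarrow> nat set) \<Rightarrow> nat set \<Rightarrow> nat \<Rightarrow> nat set \<Rightarrow> bool" where
  "admissible F I i B \<longleftrightarrow> B \<subset> F i \<and> (\<forall>j\<in>I. F j \<inter> F i \<noteq> B)"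

end

theory Submission
  imports Defs
begin

text \<open>
  Call a family \<open>F i\<close> (\<open>i \<in> I\<close>) of \<open>(d+1)\<close>-subsets of an \<open>n\<close>-set \<open>V\<close> together with
  \<open>d\<close>-subsets \<open>B i \<subseteq> F i\<close> \<^emph>\<open>private\<close> if no \<open>B i\<close> lies in another member \<open>F j\<close>.
  An admissible \<open>d\<close>-set \<open>B i\<close> is private, since a \<open>d\<close>-set inside \<open>F j \<inter> F i\<close> (\<open>j \<noteq> i\<close>)
  would equal that trace.
  For a fixed point \<open>a\<close>, sending \<open>i\<close> to \<open>F i - {a}\<close> if \<open>a \<in> F i\<close> and to \<open>B i\<close> otherwise is
  injective into the \<open>d\<close>-subsets of \<open>V - {a}\<close>; this gives the bound \<open>(n-1) choose d\<close>.
  If the bound is attained, these maps are bijective for every \<open>a\<close>. Pick \<open>i\<^sub>0\<close> with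
  \<open>F i\<^sub>0 = B i\<^sub>0 \<union> {x}\<close>. Bijectivity shows that the sets \<open>D\<close> with \<open>(F i, B i) = (D \<union> {x}, D)\<close>
  for some \<open>i\<close> are closed under exchanging one element, so they are all \<open>d\<close>-subsets of
  \<open>V - {x}\<close>, and \<open>F\<close> is the star at \<open>x\<close>.
\<close>

definition star :: "'a set \<Rightarrow> nat \<Rightarrow> 'a \<Rightarrow> 'a set set" where
  "star V k a = {G. G \<subseteq> V \<and> card G = k \<and> a \<in> G}"

lemma card_star:
  assumes "finite V" "a \<in> V"
  shows "card (star V (k + 1) a) = (card V - 1) choose k"
proof -
  have "star V (k + 1) a = insert a ` {E. E \<subseteq> V - {a} \<and> card E = k}"
  proof (intro equalityI subsetI)
    fix G assume "G \<in> star V (k + 1) a"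
    with \<open>finite V\<close> have "G = insert a (G - {a})" "G - {a} \<in> {E. E \<subseteq> V - {a} \<and> card E = k}"
      by (auto simp: star_def finite_subset)
    then show "G \<in> insert a ` {E. E \<subseteq> V - {a} \<and> card E = k}" by blast
  next
    fix G assume "G \<in> insert a ` {E. E \<subseteq> V - {a} \<and> card E = k}"
    then obtain E where "E \<subseteq> V - {a}" "card E = k" "G = insert a E" by blast
    moreover from this have "finite E" using \<open>finite V\<close> by (meson finite_Diff finite_subset)
    ultimately show "G \<in> star V (k + 1) a"
      using assms by (auto simp: star_def card_insert_if)
  qed
  moreover have "inj_on (insert a) {E. E \<subseteq> V - {a} \<and> card E = k}"
    by (rule inj_onI) (metis Diff_insert_absorb mem_Collect_eq subset_Diff_insert)
  ultimately show ?thesis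
    using assms by (simp add: card_image n_subsets)
qed

lemma card_exchange:
  assumes "finite D" "y \<in> D" "w \<notin> D"
  shows "card (insert w (D - {y})) = card D"
proof -
  have "card D > 0" using assms card_gt_0_iff by blast
  with assms show ?thesis by (simp add: card_Diff_singleton)
qed

text \<open>Connectivity of the Johnson graph.\<close>
lemma exchange_closed_contains_equicardinal:
  assumes sub: "\<And>D. D \<in> \<D> \<Longrightarrow> D \<subseteq> W" and "finite W"
    and exchange: "\<And>D y w. D \<in> \<D> \<Longrightarrow> y \<in> D \<Longrightarrow> w \<in> W - D \<Longrightarrow> insert w (D - {y}) \<in> \<D>"
    and "D \<in> \<D>" "E \<subseteq> W" "card E = card D"
  shows "E \<in> \<D>"
  using assms(4-6)
proof (induction "card (E - D)" arbitrary: D)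
  case 0
  have "finite E" "finite D"
    using 0 sub \<open>finite W\<close> by (auto intro: finite_subset)
  with 0 have "E = D"
    by (metis Diff_eq_empty_iff card_0_eq card_subset_eq finite_Diff)
  with 0 show ?case by simp
next
  case (Suc k)
  have fin: "finite D" "finite E"
    using Suc.prems sub \<open>finite W\<close> by (auto intro: finite_subset)
  obtain w where w: "w \<in> E" "w \<notin> D"
    using Suc.hyps(2) by (metis Diff_eq_empty_iff card.empty nat.distinct(1) subsetI)
  have "\<not> D \<subseteq> E"
    using card_subset_eq[OF fin(2) _ Suc.prems(3)[symmetric]] w by blast
  then obtain y where y: "y \<in> D" "y \<notin> E" by blast
  let ?D' = "insert w (D - {y})"
  have "?D' \<in> \<D>"
    using exchange[OF Suc.prems(1) y(1)] w Suc.prems(2) by blast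
  moreover have "E - ?D' = (E - D) - {w}"
    using y by auto
  then have "k = card (E - ?D')"
    using Suc.hyps(2) w fin by (simp add: card_Diff_singleton)
  moreover have "card E = card ?D'"
    using card_exchange[OF fin(1) y(1) w(2)] Suc.prems(3) by simp
  ultimately show ?case
    using Suc.hyps(1) Suc.prems(2) by blast
qed

lemma admissible_subset_imp_eq:
  assumes "admissible F J i B" "j \<in> J" "B \<subseteq> F j"
    and "finite (F j)" "card (F j) \<le> card (F i)" "card (F i) = card B + 1"
  shows "F j = F i"
proof (rule ccontr)
  assume "F j \<noteq> F i"
  have "finite (F i)"
    by (rule card_ge_0_finite) (simp add: assms(6))
  have "F j \<inter> F i \<subset> F i"
    using card_seteq[OF assms(4) _ assms(5)] \<open>F j \<noteq> F i\<close> by blast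
  then have "card (F j \<inter> F i) \<le> card B"
    using psubset_card_mono[OF \<open>finite (F i)\<close>] assms(6) by (simp add: less_Suc_eq_le)
  moreover have "B \<subseteq> F j \<inter> F i"
    using assms(1,3) by (auto simp: admissible_def)
  ultimately have "B = F j \<inter> F i"
    by (intro card_seteq) (simp_all add: \<open>finite (F i)\<close>)
  with assms(1,2) show False
    by (auto simp: admissible_def)
qed

locale private_family =
  fixes V :: "'a set" and I :: "'i set" and F B :: "'i \<Rightarrow> 'a set" and d :: nat
  assumes finite_V: "finite V"
    and F_subset: "i \<in> I \<Longrightarrow> F i \<subseteq> V"
    and card_F: "i \<in> I \<Longrightarrow> card (F i) = d + 1"
    and B_subset: "i \<in> I \<Longrightarrow> B i \<subseteq> F i"
    and card_B: "i \<in> I \<Longrightarrow> card (B i) = d"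
    and B_private: "i \<in> I \<Longrightarrow> j \<in> I \<Longrightarrow> B i \<subseteq> F j \<Longrightarrow> j = i"
begin

lemma finite_F: "i \<in> I \<Longrightarrow> finite (F i)"
  using F_subset finite_V finite_subset by blast

lemma inj_on_F: "inj_on F I"
  by (rule inj_onI) (metis B_subset B_private)

lemma finite_I: "finite I"
proof -
  have "F ` I \<subseteq> Pow V"
    using F_subset by blast
  then have "finite (F ` I)"
    using finite_V by (meson finite_Pow_iff finite_subset)
  then show ?thesis
    using finite_image_iff inj_on_F by blast
qed

definition shadow_at :: "'a \<Rightarrow> 'i \<Rightarrow> 'a set" where
  "shadow_at a i = (if a \<in> F i then F i - {a} else B i)"

lemma shadow_at_in_subsets:
  assumes "i \<in> I"
  shows "shadow_at a i \<in> {E. E \<subseteq> V - {a} \<and> card E = d}"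
  using assms F_subset B_subset card_B card_F finite_F
  by (auto simp: shadow_at_def card_Diff_singleton)

lemma inj_on_shadow_at: "inj_on (shadow_at a) I"
proof (rule inj_onI)
  fix i j assume "i \<in> I" "j \<in> I" and eq: "shadow_at a i = shadow_at a j"
  consider "a \<in> F i" "a \<in> F j" | "a \<notin> F i" | "a \<notin> F j"
    by blast
  then show "i = j"
  proof cases
    case 1
    with eq have "F i = F j"
      by (simp add: shadow_at_def) (metis insert_Diff)
    with \<open>i \<in> I\<close> \<open>j \<in> I\<close> show ?thesis
      by (meson inj_onD inj_on_F)
  next
    case 2
    with eq B_subset[OF \<open>j \<in> I\<close>] have "B i \<subseteq> F j"
      by (auto simp: shadow_at_def split: if_splits)
    with \<open>i \<in> I\<close> \<open>j \<in> I\<close> show ?thesis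
      using B_private by blast
  next
    case 3
    with eq B_subset[OF \<open>i \<in> I\<close>] have "B j \<subseteq> F i"
      by (auto simp: shadow_at_def split: if_splits)
    with \<open>i \<in> I\<close> \<open>j \<in> I\<close> show ?thesis
      using B_private by blast
  qed
qed

lemma card_le_choose:
  assumes "a \<in> V"
  shows "card I \<le> (card V - 1) choose d"
proof -
  have "card I \<le> card {E. E \<subseteq> V - {a} \<and> card E = d}"
    by (rule card_inj_on_le[OF inj_on_shadow_at]) (use shadow_at_in_subsets finite_V in auto)
  also have "\<dots> = (card V - 1) choose d"
    using assms finite_V by (simp add: n_subsets)
  finally show ?thesis .
qed

lemma shadow_at_image_eq:
  assumes tight: "card I = (card V - 1) choose d" and "a \<in> V"
  shows "shadow_at a ` I = {E. E \<subseteq> V - {a} \<and> card E = d}"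
proof (rule card_subset_eq)
  show "finite {E. E \<subseteq> V - {a} \<and> card E = d}"
    using finite_V by simp
  show "shadow_at a ` I \<subseteq> {E. E \<subseteq> V - {a} \<and> card E = d}"
    using shadow_at_in_subsets by blast
  show "card (shadow_at a ` I) = card {E. E \<subseteq> V - {a} \<and> card E = d}"
    using assms finite_V by (simp add: card_image[OF inj_on_shadow_at] n_subsets)
qed

lemma insert_in_F_image:
  assumes tight: "card I = (card V - 1) choose d"
    and "E \<subseteq> V" "card E = d" "E \<notin> B ` I" "a \<in> V" "a \<notin> E"
  shows "insert a E \<in> F ` I"
proof -
  have "E \<in> shadow_at a ` I"
    using shadow_at_image_eq[OF tight \<open>a \<in> V\<close>] assms(2,3,6) by blast
  then obtain i where "i \<in> I" "E = shadow_at a i"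
    by blast
  with \<open>E \<notin> B ` I\<close> have "a \<in> F i" "E = F i - {a}"
    by (auto simp: shadow_at_def split: if_splits)
  with \<open>i \<in> I\<close> show ?thesis
    by (metis image_eqI insert_Diff)
qed

definition link :: "'a \<Rightarrow> 'a set set" where
  "link x = B ` {i \<in> I. F i = insert x (B i)}"

lemma link_memD:
  assumes "D \<in> link x"
  shows "D \<subseteq> V - {x}" "card D = d"
proof -
  from assms obtain i where i: "i \<in> I" "F i = insert x D" "B i = D"
    by (auto simp: link_def)
  then have "x \<notin> D"
    using card_F card_B finite_F by (metis Suc_eq_plus1 card_insert_if finite_insert n_not_Suc_n)
  with i F_subset card_B show "D \<subseteq> V - {x}" "card D = d"
    by auto
qed

lemma link_exchange:
  assumes tight: "card I = (card V - 1) choose d"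
    and "D \<in> link x" "y \<in> D" "w \<in> V - {x} - D"
  shows "insert w (D - {y}) \<in> link x"
proof -
  obtain i where i: "i \<in> I" "F i = insert x D" "B i = D"
    using \<open>D \<in> link x\<close> by (auto simp: link_def)
  have D: "D \<subseteq> V - {x}" "card D = d" "finite D"
    using link_memD[OF \<open>D \<in> link x\<close>] finite_V finite_subset by auto
  have "x \<in> V" "x \<notin> D"
    using i F_subset D(1) by auto
  let ?C = "insert x (D - {y})"
  have C: "?C \<subseteq> V" "card ?C = d"
    using D \<open>x \<in> V\<close> card_exchange[OF D(3) \<open>y \<in> D\<close> \<open>x \<notin> D\<close>] by auto
  have "?C \<notin> B ` I"
  proof
    assume "?C \<in> B ` I"
    then obtain j where "j \<in> I" "B j = ?C" by blast
    with i have "B j \<subseteq> F i" "B j \<noteq> B i"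
      using D by auto
    with \<open>j \<in> I\<close> \<open>i \<in> I\<close> B_private show False
      by blast
  qed
  then have "insert w ?C \<in> F ` I"
    by (rule insert_in_F_image[OF tight C]) (use assms(4) in auto)
  then obtain j where j: "j \<in> I" "F j = insert x (insert w (D - {y}))"
    by auto
  let ?D' = "insert w (D - {y})"
  have "?D' \<in> B ` I"
  proof (rule ccontr)
    assume "?D' \<notin> B ` I"
    have D': "?D' \<subseteq> V" "card ?D' = d"
      using D assms(4) card_exchange[OF D(3) \<open>y \<in> D\<close>] by auto
    then have "insert y ?D' \<in> F ` I"
      by (rule insert_in_F_image[OF tight _ _ \<open>?D' \<notin> B ` I\<close>]) (use D assms(3,4) in auto)
    then obtain k where k: "k \<in> I" "F k = insert y ?D'"
      by blast
    with i \<open>y \<in> D\<close> have "B i \<subseteq> F k"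
      by auto
    with B_private[OF \<open>i \<in> I\<close> \<open>k \<in> I\<close>] k i assms(4) show False
      by auto
  qed
  then obtain k where "k \<in> I" "B k = ?D'"
    by blast
  with j B_private have "k = j"
    by blast
  with j \<open>B k = ?D'\<close> show ?thesis
    by (auto simp: link_def)
qed

lemma star_subset_F_image:
  assumes tight: "card I = (card V - 1) choose d" and "D \<in> link x"
  shows "star V (d + 1) x \<subseteq> F ` I"
proof
  fix G assume G: "G \<in> star V (d + 1) x"
  have "finite G"
    using G finite_V by (auto simp: star_def intro: finite_subset)
  have "G - {x} \<in> link x"
  proof (rule exchange_closed_contains_equicardinal[where W = "V - {x}"])
    show "\<And>D. D \<in> link x \<Longrightarrow> D \<subseteq> V - {x}"
      using link_memD by blast
    show "\<And>D y w. D \<in> link x \<Longrightarrow> y \<in> D \<Longrightarrow> w \<in> V - {x} - D \<Longrightarrow> insert w (D - {y}) \<in> link x"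
      using link_exchange[OF tight] by blast
    show "card (G - {x}) = card D"
      using G \<open>finite G\<close> link_memD[OF \<open>D \<in> link x\<close>] by (simp add: star_def)
  qed (use G finite_V \<open>D \<in> link x\<close> in \<open>auto simp: star_def\<close>)
  then obtain i where "i \<in> I" "F i = insert x (G - {x})"
    by (auto simp: link_def)
  moreover have "insert x (G - {x}) = G"
    using G by (auto simp: star_def)
  ultimately show "G \<in> F ` I"
    by (metis image_eqI)
qed

lemma card_eq_choose_iff_star:
  assumes "d < card V"
  shows "card I = (card V - 1) choose d \<longleftrightarrow> (\<exists>x\<in>V. F ` I = star V (d + 1) x)"
proof
  assume tight: "card I = (card V - 1) choose d"
  then have "I \<noteq> {}"
    using assms by auto
  then obtain i where "i \<in> I"
    by blast
  then have "card (F i - B i) = 1"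
    using card_F[OF \<open>i \<in> I\<close>] card_B[OF \<open>i \<in> I\<close>] B_subset[OF \<open>i \<in> I\<close>] finite_F[OF \<open>i \<in> I\<close>]
    by (simp add: card_Diff_subset finite_subset)
  then obtain x where x: "F i - B i = {x}"
    by (rule card_1_singletonE)
  then have "B i \<in> link x"
    using \<open>i \<in> I\<close> B_subset by (auto simp: link_def)
  have "x \<in> V"
    using x \<open>i \<in> I\<close> F_subset by blast
  have "F ` I = star V (d + 1) x"
  proof (rule card_subset_eq[symmetric])
    show "finite (F ` I)"
      using finite_I by simp
    show "star V (d + 1) x \<subseteq> F ` I"
      by (rule star_subset_F_image[OF tight \<open>B i \<in> link x\<close>])
    show "card (star V (d + 1) x) = card (F ` I)"
      using card_star[OF finite_V \<open>x \<in> V\<close>] tight by (simp add: card_image[OF inj_on_F])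
  qed
  with \<open>x \<in> V\<close> show "\<exists>x\<in>V. F ` I = star V (d + 1) x"
    by blast
next
  assume "\<exists>x\<in>V. F ` I = star V (d + 1) x"
  then show "card I = (card V - 1) choose d"
    using card_star[OF finite_V] card_image[OF inj_on_F] by metis
qed

end

theorem claim4p2:
  fixes d n m :: nat and F :: "nat \<Rightarrow> nat set" and B :: "nat \<Rightarrow> nat set"
  assumes "d \<ge> 1" and "n \<ge> d + 2"
    and "\<forall>i\<in>{1..m}. F i \<subseteq> {1..n} \<and> card (F i) = d + 1"
    and "inj_on F {1..m}"
    and "vc_dim_le F {1..m} d"
    and "\<forall>i\<in>{1..m}. admissible F {1..m} i (B i)"
    and "\<forall>i\<in>{1..m}. \<forall>B'. admissible F {1..m} i B' \<longrightarrow> card B' \<le> card (B i)"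
  shows "card {i\<in>{1..m}. card (B i) = d} \<le> (n - 1) choose d \<and>
         (card {i\<in>{1..m}. card (B i) = d} = (n - 1) choose d \<longleftrightarrow>
          (\<exists>a\<in>{1..n}. F ` {i\<in>{1..m}. card (B i) = d} =
                        {G. G \<subseteq> {1..n} \<and> card G = d + 1 \<and> a \<in> G}))"
proof -
  let ?I = "{i\<in>{1..m}. card (B i) = d}"
  have F: "F i \<subseteq> {1..n}" "card (F i) = d + 1" "finite (F i)" if "i \<in> {1..m}" for i
    using assms(3) that finite_subset by blast+
  have B_private: "j = i" if i: "i \<in> ?I" and j: "j \<in> ?I" and "B i \<subseteq> F j" for i j
  proof -
    have "F j = F i"
      by (rule admissible_subset_imp_eq[where J = "{1..m}"]) (use i j \<open>B i \<subseteq> F j\<close> F assms(6) in auto)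
    with i j assms(4) show "j = i"
      by (auto dest: inj_onD)
  qed
  interpret private_family "{1..n}" ?I F B d
  proof
    show "B i \<subseteq> F i" if "i \<in> ?I" for i
      using assms(6) that by (auto simp: admissible_def)
    show "j = i" if "i \<in> ?I" "j \<in> ?I" "B i \<subseteq> F j" for i j
      using B_private that .
  qed (use F in auto)
  have "card ?I \<le> (n - 1) choose d"
    using card_le_choose[of 1] assms(2) by simp
  moreover have "card ?I = (n - 1) choose d \<longleftrightarrow> (\<exists>a\<in>{1..n}. F ` ?I = star {1..n} (d + 1) a)"
    using card_eq_choose_iff_star assms(2) by simp
  ultimately show ?thesis
    unfolding star_def by blast
qed

end
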